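(* Let $T:\mathbb{Z}_{\ge 0}\to\mathbb{R}$ satisfy $T(mn) = T(m)T(n) + T(m-1)T(n-1)$ for all integers $m,n\ge 1$, and suppose $T(0)=0$ and $T(1)=1$. Write $c=T(2)$ and $d=T(3)$. Then for all $n\ge 1$, $$T(2n)=cT(n)+T(n-1)\quad\text{and}\quad T(2n-1)=T(n)+(d-c)T(n-1).$$ In particular, $T(n)$ for every $n\ge 3$ is determined by $c$ and $d$: if $T'$ is another sequence satisfying the same product rule with $T'(0)=0$, $T'(1)=1$, $T'(2)=c$, $T'(3)=d$, then $T'(n)=T(n)$ for all $n\ge 0$. *)

theory Defs
  imports Complex_Main
begin

end

theory Submission
  imports Defs
begin

text \<open>Expanding \<open>T (4 n)\<close> once as \<open>T (4 \<cdot> n)\<close> and once as \<open>T (2 \<cdot> 2n)\<close> expresses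
  \<open>T (2n - 1)\<close> through \<open>T n\<close> and \<open>T (n - 1)\<close>; together with \<open>T (2 \<cdot> n)\<close> this is a halving
  recurrence, so by strong induction every value is determined by \<open>T 0\<close>, \<open>T 1\<close>, \<open>T 2\<close>
  and \<open>T 3\<close>.\<close>

definition product_rule :: "(nat \<Rightarrow> 'a::comm_ring_1) \<Rightarrow> bool" where
  "product_rule T \<longleftrightarrow>
     (\<forall>m n. m \<ge> 1 \<longrightarrow> n \<ge> 1 \<longrightarrow> T (m * n) = T m * T n + T (m - 1) * T (n - 1))"

lemma product_ruleD:
  "product_rule T \<Longrightarrow> m \<ge> 1 \<Longrightarrow> n \<ge> 1 \<Longrightarrow> T (m * n) = T m * T n + T (m - 1) * T (n - 1)"
  unfolding product_rule_def by blast

lemma product_rule_double: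
  assumes "product_rule T" "T 1 = 1" "n \<ge> 1"
  shows "T (2 * n) = T 2 * T n + T (n - 1)"
  using product_ruleD[OF assms(1), of 2 n] assms(2,3) by simp

lemma product_rule_double_pred:
  assumes T: "product_rule T" and T1: "T 1 = 1" and n: "n \<ge> 1"
  shows "T (2 * n - 1) = T n + (T 3 - T 2) * T (n - 1)"
proof -
  have "T (4 * n) = T 4 * T n + T 3 * T (n - 1)"
    using product_ruleD[OF T, of 4 n] n by simp
  moreover have "T 4 = T 2 * T 2 + 1"
    using product_ruleD[OF T, of 2 2] T1 by simp
  moreover have "T (4 * n) = T 2 * T (2 * n) + T (2 * n - 1)"
    using product_ruleD[OF T, of 2 "2 * n"] n T1 by (simp add: mult.assoc[symmetric])
  ultimately show ?thesis
    using product_rule_double[OF T T1 n] by (simp add: algebra_simps)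
qed

text \<open>The case \<open>n = 1\<close> of the first equation is \<open>S 2 = c \<cdot> S 1 + S 0\<close>, so \<open>S 0\<close> and
  \<open>S 1\<close> already fix everything: each \<open>n \<ge> 2\<close> is \<open>2k\<close> or \<open>2k - 1\<close> with \<open>1 \<le> k < n\<close>.\<close>

lemma halving_recurrence_unique:
  fixes S T :: "nat \<Rightarrow> 'a::ring"
  assumes S: "\<And>n. n \<ge> 1 \<Longrightarrow> S (2 * n) = c * S n + S (n - 1) \<and> S (2 * n - 1) = S n + e * S (n - 1)"
    and T: "\<And>n. n \<ge> 1 \<Longrightarrow> T (2 * n) = c * T n + T (n - 1) \<and> T (2 * n - 1) = T n + e * T (n - 1)"
    and "S 0 = T 0" "S 1 = T 1"
  shows "S n = T n"
proof (induction n rule: less_induct)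
  case (less n)
  consider "n \<le> 1" | k where "n = 2 * k" "1 \<le> k" "k < n" | k where "n = 2 * k - 1" "1 \<le> k" "k < n"
  proof (cases "n \<le> 1")
    case False
    show thesis
    proof (cases "even n")
      case True
      with False show thesis using that(2)[of "n div 2"] by auto
    next
      case False
      with \<open>\<not> n \<le> 1\<close> have "n = 2 * (n div 2 + 1) - 1" "n div 2 + 1 < n" by presburger+
      then show thesis using that(3)[of "n div 2 + 1"] by linarith
    qed
  qed
  then show ?case
  proof cases
    case 1
    then show ?thesis using assms(3,4) by (cases n) auto
  next
    case (2 k)
    then show ?thesis using S[of k] T[of k] less[of k] less[of "k - 1"] by simp
  next
    case (3 k)
    then show ?thesis using S[of k] T[of k] less[of k] less[of "k - 1"] by simp
  qed
qed

theorem lemma9: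
  fixes T :: "nat \<Rightarrow> real" and c d :: real
  assumes prod: "\<And>m n. m \<ge> 1 \<Longrightarrow> n \<ge> 1 \<Longrightarrow> T (m * n) = T m * T n + T (m - 1) * T (n - 1)"
    and T0: "T 0 = 0" and T1: "T 1 = 1"
    and c_def: "c = T 2" and d_def: "d = T 3"
  shows "(\<forall>n\<ge>1. T (2 * n) = c * T n + T (n - 1) \<and> T (2 * n - 1) = T n + (d - c) * T (n - 1))
       \<and> (\<forall>T' :: nat \<Rightarrow> real.
            (\<forall>m n. m \<ge> 1 \<longrightarrow> n \<ge> 1 \<longrightarrow> T' (m * n) = T' m * T' n + T' (m - 1) * T' (n - 1))
            \<and> T' 0 = 0 \<and> T' 1 = 1 \<and> T' 2 = c \<and> T' 3 = d
            \<longrightarrow> (\<forall>n. T' n = T n))"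
proof -
  have "product_rule T"
    unfolding product_rule_def using prod by blast
  then have rec: "T (2 * n) = c * T n + T (n - 1) \<and> T (2 * n - 1) = T n + (d - c) * T (n - 1)"
    if "n \<ge> 1" for n
    using product_rule_double product_rule_double_pred T1 that c_def d_def by blast
  have "T' n = T n"
    if "product_rule T'" "T' 0 = 0" "T' 1 = 1" "T' 2 = c" "T' 3 = d" for T' n
  proof (rule halving_recurrence_unique[where c = c and e = "d - c"])
    show "T' (2 * k) = c * T' k + T' (k - 1) \<and> T' (2 * k - 1) = T' k + (d - c) * T' (k - 1)"
      if "k \<ge> 1" for k
      using product_rule_double product_rule_double_pred \<open>k \<ge> 1\<close> \<open>product_rule T'\<close>
        \<open>T' 1 = 1\<close> \<open>T' 2 = c\<close> \<open>T' 3 = d\<close> by metis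
  qed (use rec that T0 T1 in auto)
  then show ?thesis
    using rec unfolding product_rule_def by blast
qed

end
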